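(* Let $P$ be the symbol probability mass function of a stationary memoryless source over an alphabet of size $D\ge2$, with minimal mass $p_{\min}$. Let $\mathcal C$ be a Tunstall code with codewords of fixed length $m$ over an alphabet $\mathcal X$ ($|\mathcal X|\ge2$), corresponding to a Tunstall tree with $n$ leaves where $n\le|\mathcal X|^m<n+(D-1)$. For $\varepsilon>0$ let $d=d(m,\varepsilon):=\frac{m\varepsilon\ln|\mathcal X|}{1+\varepsilon}+\ln\big(1-\frac{D-1}{|\mathcal X|^m}\big)$ if $D>2$, and $d:=\frac{m\varepsilon\ln|\mathcal X|}{1+\varepsilon}$ if $D=2$, and suppose $d>0$. If $$p_{\min}\ge\frac{W_0(-e^{-d-1})}{W_{-1}(-e^{-d-1})},$$ then the compression rate $R$ of the Tunstall code satisfies $R\le(1+\varepsilon)H(P)$.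
   Context: $W_0$ and $W_{-1}$ are the principal and secondary real branches of the Lambert $W$ function ($W(u)e^{W(u)}=u$). A Tunstall tree with $n$ leaves is obtained from the root by repeatedly expanding a leaf of maximal probability into its $D$ children (a leaf reached by source symbols $s_1\cdots s_k$ has probability $\prod_jP(s_j)$); the Tunstall code parses the source sequence into the segments labelling the leaves and assigns to each leaf a distinct codeword of length $m$ over $\mathcal X$. The compression rate is $R:=\frac{m\log|\mathcal X|}{\mathbb E[\text{depth of the parsed leaf}]}$, the expected number of code letters (in the same logarithmic units as $H$) per source symbol, and $H(P)=-\sum_sP(s)\log P(s)$. *)

theory Defs
  imports Complex_Main
begin

text \<open>Real branches of the Lambert W function, for arguments in [-1/e, 0).\<close>
definition lambertW0 :: "real \<Rightarrow> real" where
  "lambertW0 u = (THE w. -1 \<le> w \<and> w * exp w = u)"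

definition lambertWm1 :: "real \<Rightarrow> real" where
  "lambertWm1 u = (THE w. w \<le> -1 \<and> w * exp w = u)"

definition word_prob :: "('a \<Rightarrow> real) \<Rightarrow> 'a list \<Rightarrow> real" where
  "word_prob P w = prod_list (map P w)"

text \<open>Tunstall trees, represented by their set of leaves (source strings).
  Starting from the root, repeatedly expand a leaf of maximal probability
  into its children (one per source symbol).\<close>
inductive tunstall_tree :: "'a set \<Rightarrow> ('a \<Rightarrow> real) \<Rightarrow> 'a list set \<Rightarrow> bool"
  for S :: "'a set" and P :: "'a \<Rightarrow> real" where
  root: "tunstall_tree S P {[]}"
| expand: "tunstall_tree S P T \<Longrightarrow> w \<in> T \<Longrightarrow> (\<forall>v\<in>T. word_prob P v \<le> word_prob P w)
           \<Longrightarrow> tunstall_tree S P ((T - {w}) \<union> (\<lambda>s. w @ [s]) ` S)"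

definition entropy :: "'a set \<Rightarrow> ('a \<Rightarrow> real) \<Rightarrow> real" where
  "entropy S P = - (\<Sum>s\<in>S. P s * ln (P s))"

definition expected_depth :: "('a \<Rightarrow> real) \<Rightarrow> 'a list set \<Rightarrow> real" where
  "expected_depth P T = (\<Sum>w\<in>T. word_prob P w * real (length w))"

definition compression_rate :: "nat \<Rightarrow> nat \<Rightarrow> ('a \<Rightarrow> real) \<Rightarrow> 'a list set \<Rightarrow> real" where
  "compression_rate m X_card P T = real m * ln (real X_card) / expected_depth P T"

end

theory Submission
  imports Defs "HOL-Analysis.Analysis"
begin

text \<open>Let \<open>Q\<close> be the distribution of the parsed leaf. Since only a leaf of maximal mass is ever
  split, any two leaf masses are within a factor \<open>p\<^sub>m\<^sub>i\<^sub>n\<close> of each other, and the leaf entropy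
  \<open>-\<Sum> Q ln Q\<close> equals \<open>E[depth] H(P)\<close>. Normalising by the least leaf mass, a distribution on \<open>n\<close>
  atoms with mass ratios in \<open>[1, 1/t]\<close> has entropy at least \<open>ln n - (k - 1 - ln k)\<close> as soon as
  \<open>s ln s \<le> k (s - 1)\<close> on \<open>[1, 1/t]\<close>. For \<open>k = -W\<^sub>-\<^sub>1(-e\<^sup>-\<^sup>d\<^sup>-\<^sup>1)\<close> and
  \<open>t = W\<^sub>0/W\<^sub>-\<^sub>1\<close> this is an exact chord of \<open>s ln s\<close> and \<open>k - 1 - ln k = d\<close>, so
  \<open>E[depth] H(P) \<ge> ln n - d\<close>; the choice of \<open>d\<close> and \<open>n > |X|\<^sup>m - (D - 1)\<close> give
  \<open>ln n - d \<ge> m ln |X| / (1 + \<epsilon>)\<close>.\<close>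

section \<open>The real branches of the Lambert W function\<close>

lemma mult_exp_strict_mono:
  fixes x y :: real
  assumes "-1 \<le> x" "x < y"
  shows "x * exp x < y * exp y"
proof (rule DERIV_pos_imp_increasing_open[OF assms(2)])
  fix z assume "x < z"
  then have "0 < (1 + z) * exp z" using assms by simp
  then show "\<exists>r. DERIV (\<lambda>w. w * exp w) z :> r \<and> r > 0"
    by (auto intro!: derivative_eq_intros simp: algebra_simps)
qed (intro continuous_intros)

lemma mult_exp_strict_antimono:
  fixes x y :: real
  assumes "y \<le> -1" "x < y"
  shows "y * exp y < x * exp x"
proof (rule DERIV_neg_imp_decreasing_open[OF assms(2)])
  fix z assume "z < y"
  then have "(1 + z) * exp z < 0" using assms by (intro mult_neg_pos) auto
  then show "\<exists>r. DERIV (\<lambda>w. w * exp w) z :> r \<and> r < 0"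
    by (auto intro!: derivative_eq_intros simp: algebra_simps)
qed (intro continuous_intros)

lemma lambertW0:
  fixes u :: real
  assumes "- exp (-1) < u" "u < 0"
  shows "-1 \<le> lambertW0 u" and "lambertW0 u * exp (lambertW0 u) = u"
proof -
  have "\<exists>w. -1 \<le> w \<and> w \<le> 0 \<and> w * exp w = u"
    by (rule IVT') (use assms in \<open>auto intro!: continuous_intros\<close>)
  then obtain w where w: "-1 \<le> w" "w * exp w = u" by blast
  have "v = w" if "-1 \<le> v" "v * exp v = u" for v
    using mult_exp_strict_mono[of v w] mult_exp_strict_mono[of w v] that w
    by (cases v w rule: linorder_cases) auto
  with w have "\<exists>!w. -1 \<le> w \<and> w * exp w = u" by blast
  from theI'[OF this] show "-1 \<le> lambertW0 u" "lambertW0 u * exp (lambertW0 u) = u"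
    unfolding lambertW0_def by auto
qed

lemma lambertWm1:
  fixes u :: real
  assumes "- exp (-1) < u" "u < 0"
  shows "lambertWm1 u \<le> -1" and "lambertWm1 u * exp (lambertWm1 u) = u"
proof -
  \<comment> \<open>At \<open>x = 1 - 4/u\<close> we have \<open>x exp (-x) < 4/x < -u\<close>, since \<open>exp x > x^2/4\<close>.\<close>
  define x where "x = 1 - 4 / u"
  have x: "x > 1" using assms unfolding x_def by (simp add: field_simps)
  have "x / 2 < exp (x / 2)" using exp_ge_add_one_self[of "x / 2"] by linarith
  then have "(x / 2)^2 < exp (x / 2)^2" using x by (intro power_strict_mono) auto
  also have "exp (x / 2)^2 = exp x" by (simp add: power2_eq_square flip: exp_add)
  finally have "x * exp (-x) < 4 / x" using x by (simp add: exp_minus field_simps power2_eq_square)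
  also have "4 / x < -u" using assms x unfolding x_def by (simp add: field_simps mult_neg_neg)
  finally have "u \<le> (-x) * exp (-x)" by simp
  then have "\<exists>w. -x \<le> w \<and> w \<le> -1 \<and> w * exp w = u"
    by (intro IVT2') (use assms x in \<open>auto intro!: continuous_intros\<close>)
  then obtain w where w: "w \<le> -1" "w * exp w = u" by blast
  have "v = w" if "v \<le> -1" "v * exp v = u" for v
    using mult_exp_strict_antimono[of v w] mult_exp_strict_antimono[of w v] that w
    by (cases v w rule: linorder_cases) auto
  with w have "\<exists>!w. w \<le> -1 \<and> w * exp w = u" by blast
  from theI'[OF this] show "lambertWm1 u \<le> -1" "lambertWm1 u * exp (lambertWm1 u) = u"
    unfolding lambertWm1_def by auto
qed

lemma mult_ln_le_chord:
  fixes \<rho> s :: real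
  assumes "1 < \<rho>" "1 \<le> s" "s \<le> \<rho>"
  shows "s * ln s \<le> (s - 1) * (\<rho> * ln \<rho> / (\<rho> - 1))"
proof -
  have cvx: "convex_on {1..\<rho>} (\<lambda>x. x * ln x)"
    by (rule convex_on_realI[where f' = "\<lambda>x. ln x + 1"])
      (auto intro!: derivative_eq_intros)
  define l where "l = (s - 1) / (\<rho> - 1)"
  have l: "0 \<le> l" "l \<le> 1" using assms unfolding l_def by (auto simp: field_simps)
  have "l * (\<rho> - 1) = s - 1" using assms unfolding l_def by simp
  then have "s = (1 - l) *\<^sub>R 1 + l *\<^sub>R \<rho>" by (simp add: algebra_simps)
  then have "s * ln s \<le> (1 - l) * (1 * ln 1) + l * (\<rho> * ln \<rho>)"
    using convex_onD[OF cvx l, of 1 \<rho>] assms by simp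
  then show ?thesis unfolding l_def by simp
qed

lemma lambertW_chord:
  fixes d :: real
  assumes "d > 0"
  defines "k \<equiv> - lambertWm1 (- exp (- d - 1))"
    and "t \<equiv> lambertW0 (- exp (- d - 1)) / lambertWm1 (- exp (- d - 1))"
  shows "0 < t" and "0 < k" and "k - 1 - ln k = d"
    and "\<And>s. 1 \<le> s \<Longrightarrow> s \<le> 1 / t \<Longrightarrow> s * ln s \<le> k * (s - 1)"
proof -
  define u where "u = - exp (- d - 1)"
  have u: "- exp (-1) < u" "u < 0" unfolding u_def using assms by auto
  define a b where "a = lambertW0 u" and "b = lambertWm1 u"
  note a = lambertW0[OF u, folded a_def] and b = lambertWm1[OF u, folded b_def]
  have "a \<noteq> b" using a b u by force
  moreover have "a * exp a < 0" using a u by simp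
  ultimately have a0: "a < 0" and ba: "b < a" using a b by (auto simp: mult_less_0_iff)
  show "0 < t" "0 < k" unfolding t_def k_def using a0 ba b
    by (auto simp: u_def[symmetric] a_def[symmetric] b_def[symmetric] divide_neg_neg)
  have "ln (-b) + b = ln ((-b) * exp b)" using b(1) ln_mult[of "-b" "exp b"] by simp
  also have "(-b) * exp b = exp (- d - 1)" using b unfolding u_def by simp
  finally have "ln (-b) + b = - d - 1" by simp
  then show "k - 1 - ln k = d" unfolding k_def u_def[symmetric] b_def[symmetric] by simp
  \<comment> \<open>\<open>a exp a = b exp b\<close> gives \<open>ln (b/a) = a - b\<close>, so the chord of \<open>s ln s\<close> over \<open>[1, b/a]\<close> has slope \<open>-b\<close>.\<close>
  fix s assume s: "1 \<le> s" "s \<le> 1 / t"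
  have "b / a = exp (a - b)" using a b a0 by (simp add: exp_diff field_simps)
  then have "(b / a) * ln (b / a) / (b / a - 1) = (b / a) * (a - b) / (b / a - 1)" by simp
  also have "\<dots> = -b" using a0 ba by (simp add: field_simps)
  finally have "(b / a) * ln (b / a) / (b / a - 1) = -b" .
  moreover have "1 < b / a" "s \<le> b / a"
    using a0 ba s unfolding t_def u_def[symmetric] a_def[symmetric] b_def[symmetric] by (auto simp: field_simps)
  ultimately show "s * ln s \<le> k * (s - 1)"
    using mult_ln_le_chord[of "b / a" s] s unfolding k_def u_def[symmetric] b_def[symmetric] by (simp add: mult.commute)
qed

section \<open>Entropy of distributions with bounded mass ratios\<close>

lemma xlnx_mult:
  fixes x y :: real
  assumes "0 \<le> x" "0 \<le> y"
  shows "x * y * ln (x * y) = y * (x * ln x) + x * (y * ln y)"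
  using assms by (cases "x = 0 \<or> y = 0") (auto simp: ln_mult algebra_simps)

lemma entropy_nonneg:
  assumes "finite S" "\<forall>s\<in>S. 0 \<le> P s" "(\<Sum>s\<in>S. P s) = 1"
  shows "0 \<le> entropy S P"
proof -
  have "P s * ln (P s) \<le> 0" if "s \<in> S" for s
  proof -
    have "0 \<le> P s" "P s \<le> 1" using member_le_sum[of s S P] assms that by auto
    then have "ln (P s) \<le> 0" by (cases "P s = 0") simp_all
    then show ?thesis using \<open>0 \<le> P s\<close> by (rule mult_nonneg_nonpos[rotated])
  qed
  then show ?thesis unfolding entropy_def by (simp add: sum_nonpos)
qed

lemma entropy_ge_of_bounded_ratio:
  fixes Q :: "'a \<Rightarrow> real"
  assumes fin: "finite T" and sum1: "(\<Sum>v\<in>T. Q v) = 1"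
    and ratio: "\<forall>v\<in>T. \<forall>w\<in>T. t * Q w \<le> Q v" and t: "0 < t" and k: "0 < k"
    and chord: "\<And>s. 1 \<le> s \<Longrightarrow> s \<le> 1 / t \<Longrightarrow> s * ln s \<le> k * (s - 1)"
  shows "ln (card T) - (k - 1 - ln k) \<le> - (\<Sum>v\<in>T. Q v * ln (Q v))"
proof -
  \<comment> \<open>Write \<open>Q v = q s\<^sub>v\<close> with \<open>q\<close> the least mass, so that \<open>s\<^sub>v \<in> [1, 1/t]\<close>, and bound
    \<open>s\<^sub>v ln s\<^sub>v\<close> by the chord; the remaining term is optimised by \<open>ln x \<le> x - 1\<close>.\<close>
  have ne: "T \<noteq> {}" using sum1 by auto
  define n where "n = real (card T)"
  have n: "n > 0" unfolding n_def using fin ne by (simp add: card_gt_0_iff)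
  define q where "q = Min (Q ` T)"
  have q_le: "q \<le> Q v" if "v \<in> T" for v unfolding q_def using fin that by simp
  have "q \<in> Q ` T" unfolding q_def using fin ne by (intro Min_in) auto
  then obtain w0 where w0: "w0 \<in> T" "q = Q w0" by blast
  obtain w where w: "w \<in> T" "Q w > 0"
    using sum1 sum_nonpos[of T Q] by (metis not_le zero_less_one)
  have q: "q > 0" using ratio w w0 t by (metis mult_pos_pos less_le_trans)
  have each: "Q v * ln (n * Q v) \<le> Q v * (ln (n * q) + k) - k * q" if v: "v \<in> T" for v
  proof -
    define s where "s = Q v / q"
    have s1: "1 \<le> s" unfolding s_def using q_le[OF v] q by simp
    have "t * Q v \<le> q" using ratio w0 v by auto
    then have s2: "s \<le> 1 / t" unfolding s_def using q t by (simp add: field_simps)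
    have Qv: "Q v = q * s" unfolding s_def using q by simp
    have "Q v * ln (n * Q v) = Q v * ln (n * q) + q * (s * ln s)"
      using n q s1 unfolding Qv by (simp add: ln_mult algebra_simps)
    also have "\<dots> \<le> Q v * ln (n * q) + q * (k * (s - 1))"
      using chord[OF s1 s2] q by simp
    also have "\<dots> = Q v * (ln (n * q) + k) - k * q" unfolding Qv by (simp add: algebra_simps)
    finally show ?thesis .
  qed
  have "(\<Sum>v\<in>T. Q v * ln (n * Q v)) \<le> (\<Sum>v\<in>T. Q v * (ln (n * q) + k) - k * q)"
    using each by (rule sum_mono)
  also have "\<dots> = ln (n * q) + k - k * (n * q)"
    using sum1 unfolding n_def by (simp add: sum_subtractf flip: sum_distrib_right)
  also have "\<dots> \<le> k - 1 - ln k"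
    using ln_le_minus_one[of "k * (n * q)"] k n q by (simp add: ln_mult)
  finally have "(\<Sum>v\<in>T. Q v * ln (n * Q v)) \<le> k - 1 - ln k" .
  moreover have "(\<Sum>v\<in>T. Q v * ln (n * Q v)) = ln n + (\<Sum>v\<in>T. Q v * ln (Q v))"
  proof -
    have "(\<Sum>v\<in>T. Q v * ln (n * Q v)) = (\<Sum>v\<in>T. Q v * ln n + Q v * ln (Q v))"
      using n q_le q by (intro sum.cong) (auto simp: ln_mult distrib_left)
    then show ?thesis using sum1 by (simp add: sum.distrib flip: sum_distrib_right)
  qed
  ultimately show ?thesis unfolding n_def by linarith
qed

section \<open>Tunstall trees\<close>

lemma word_prob_snoc: "word_prob P (w @ [s]) = word_prob P w * P s"
  by (simp add: word_prob_def)

lemma word_prob_nonneg: "\<forall>s\<in>set w. 0 \<le> P s \<Longrightarrow> 0 \<le> word_prob P w"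
  unfolding word_prob_def by (induction w) auto

lemma tunstall_tree_finite: "tunstall_tree S P T \<Longrightarrow> finite S \<Longrightarrow> finite T"
  by (induction rule: tunstall_tree.induct) auto

lemma tunstall_tree_letters: "tunstall_tree S P T \<Longrightarrow> w \<in> T \<Longrightarrow> set w \<subseteq> S"
  by (induction arbitrary: w rule: tunstall_tree.induct) (auto simp: subset_iff)

lemma tunstall_tree_prefix_free:
  "tunstall_tree S P T \<Longrightarrow> v \<in> T \<Longrightarrow> v @ u \<in> T \<Longrightarrow> u = []"
proof (induction arbitrary: v u rule: tunstall_tree.induct)
  case root
  then show ?case by simp
next
  case (expand T w)
  show ?case
  proof (cases "v @ u \<in> T - {w}")
    case True
    show ?thesis
    proof (cases "v \<in> T - {w}")
      case False
      then obtain s where "v = w @ [s]" using expand.prems by auto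
      then show ?thesis using expand.IH[of w "[s] @ u"] expand.hyps True by simp
    qed (use True expand.IH in auto)
  next
    case False
    then obtain s where s: "v @ u = w @ [s]" using expand.prems by auto
    show ?thesis
    proof (rule ccontr)
      assume "u \<noteq> []"
      then obtain u' x where u: "u = u' @ [x]" by (cases u rule: rev_cases) auto
      then have "w = v @ u'" using s by simp
      then have "v \<in> T" "v \<noteq> w" using expand.prems u by auto
      then show False using expand.IH[of v u'] expand.hyps \<open>w = v @ u'\<close> by auto
    qed
  qed
qed

lemma sum_expand_leaf:
  fixes f :: "'a list \<Rightarrow> 'b::ab_group_add"
  assumes "finite T" "finite S" "w \<in> T" "\<forall>s\<in>S. w @ [s] \<notin> T"
  shows "(\<Sum>v\<in>(T - {w}) \<union> (\<lambda>s. w @ [s]) ` S. f v) = (\<Sum>v\<in>T. f v) - f w + (\<Sum>s\<in>S. f (w @ [s]))"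
proof -
  have "(T - {w}) \<inter> (\<lambda>s. w @ [s]) ` S = {}" using assms(4) by auto
  moreover have "inj_on (\<lambda>s. w @ [s]) S" by (auto simp: inj_on_def)
  ultimately show ?thesis
    using assms by (simp add: sum.union_disjoint sum.reindex sum_diff1)
qed

lemma tunstall_tree_sum_expand:
  fixes f :: "'a list \<Rightarrow> 'b::ab_group_add"
  assumes "tunstall_tree S P T" "finite S" "w \<in> T"
  shows "(\<Sum>v\<in>(T - {w}) \<union> (\<lambda>s. w @ [s]) ` S. f v) = (\<Sum>v\<in>T. f v) - f w + (\<Sum>s\<in>S. f (w @ [s]))"
  using assms tunstall_tree_prefix_free[OF assms(1) assms(3), of "[_]"]
  by (intro sum_expand_leaf) (auto dest: tunstall_tree_finite)

lemma tunstall_tree_sum_word_prob: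
  assumes "tunstall_tree S P T" "finite S" "(\<Sum>s\<in>S. P s) = 1"
  shows "(\<Sum>w\<in>T. word_prob P w) = 1"
  using assms(1)
proof (induction rule: tunstall_tree.induct)
  case (expand T w)
  then show ?case
    using tunstall_tree_sum_expand[OF expand.hyps(1) assms(2) expand.hyps(2), of "word_prob P"] assms(3)
    by (simp add: word_prob_snoc flip: sum_distrib_left)
qed (simp add: word_prob_def)

lemma tunstall_tree_word_prob_ratio:
  assumes "tunstall_tree S P T" "S \<noteq> {}" and P: "\<forall>s\<in>S. p \<le> P s \<and> P s \<le> 1" and "0 \<le> p"
  shows "\<forall>v\<in>T. \<forall>x\<in>T. p * word_prob P x \<le> word_prob P v"
  using assms(1)
proof (induction rule: tunstall_tree.induct)
  case root
  from assms(2) obtain s where "s \<in> S" by blast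
  then show ?case using P by (force simp: word_prob_def)
next
  case (expand T w)
  let ?T' = "(T - {w}) \<union> (\<lambda>s. w @ [s]) ` S"
  have Qw: "0 \<le> word_prob P w"
    using tunstall_tree_letters[OF expand.hyps(1,2)] P assms(4) by (intro word_prob_nonneg) force
  \<comment> \<open>All new masses lie in \<open>[p Q(w), Q(w)]\<close> and \<open>Q(w)\<close> was maximal.\<close>
  have "word_prob P y \<le> word_prob P w \<and> p * word_prob P w \<le> word_prob P y" if y: "y \<in> ?T'" for y
  proof (cases "y \<in> T")
    case True
    then show ?thesis using expand.hyps(2,3) expand.IH by auto
  next
    case False
    then obtain s where s: "s \<in> S" "y = w @ [s]" using y by auto
    then have "word_prob P w * P s \<le> word_prob P w" "p * word_prob P w \<le> P s * word_prob P w"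
      using P Qw by (auto intro: mult_left_le mult_right_mono)
    then show ?thesis using s by (simp add: word_prob_snoc mult.commute)
  qed
  then show ?case using assms(4) by (meson mult_left_mono order_trans)
qed

lemma tunstall_tree_expected_depth_expand:
  assumes "tunstall_tree S P T" "finite S" "(\<Sum>s\<in>S. P s) = 1" "w \<in> T"
  shows "expected_depth P ((T - {w}) \<union> (\<lambda>s. w @ [s]) ` S) = expected_depth P T + word_prob P w"
proof -
  have "(\<Sum>s\<in>S. word_prob P (w @ [s]) * real (length (w @ [s])))
      = (\<Sum>s\<in>S. P s * (word_prob P w * (1 + real (length w))))"
    by (intro sum.cong) (simp_all add: word_prob_snoc algebra_simps)
  also have "\<dots> = (\<Sum>s\<in>S. P s) * (word_prob P w * (1 + real (length w)))"
    by (simp add: sum_distrib_right)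
  finally show ?thesis
    using tunstall_tree_sum_expand[OF assms(1,2,4), of "\<lambda>v. word_prob P v * real (length v)"] assms(3)
    unfolding expected_depth_def by (simp add: algebra_simps)
qed

lemma tunstall_tree_leaf_entropy:
  assumes "tunstall_tree S P T" "finite S" "\<forall>s\<in>S. 0 \<le> P s" "(\<Sum>s\<in>S. P s) = 1"
  shows "- (\<Sum>w\<in>T. word_prob P w * ln (word_prob P w)) = expected_depth P T * entropy S P"
  using assms(1)
proof (induction rule: tunstall_tree.induct)
  case root
  then show ?case by (simp add: word_prob_def expected_depth_def)
next
  case (expand T w)
  define Q where "Q = word_prob P w"
  have "0 \<le> Q"
    unfolding Q_def using tunstall_tree_letters[OF expand.hyps(1,2)] assms(3)
    by (intro word_prob_nonneg) force
  then have "(\<Sum>s\<in>S. word_prob P (w @ [s]) * ln (word_prob P (w @ [s])))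
      = (\<Sum>s\<in>S. P s * (Q * ln Q) + Q * (P s * ln (P s)))"
    using assms(3) by (intro sum.cong) (auto simp: word_prob_snoc Q_def[symmetric] xlnx_mult)
  also have "\<dots> = Q * ln Q - Q * entropy S P"
    using assms(4) by (simp add: entropy_def sum.distrib sum_distrib_left flip: sum_distrib_right)
  finally show ?case
    using tunstall_tree_sum_expand[OF expand.hyps(1) assms(2) expand.hyps(2),
        of "\<lambda>v. word_prob P v * ln (word_prob P v)"] expand.IH
      tunstall_tree_expected_depth_expand[OF expand.hyps(1) assms(2,4) expand.hyps(2)]
    by (simp add: Q_def algebra_simps)
qed

section \<open>The rate bound\<close>

lemma ln_leaf_count_ge:
  fixes n N D m :: nat and \<epsilon> d :: real
  assumes N: "2 \<le> N" and n: "N ^ m < n + (D - 1)" and D: "2 \<le> D" and \<epsilon>: "0 < \<epsilon>"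
    and c_pos: "D > 2 \<longrightarrow> 0 < 1 - (real D - 1) / real N ^ m"
    and d: "d = (if D > 2 then real m * \<epsilon> * ln (real N) / (1 + \<epsilon>) + ln (1 - (real D - 1) / real N ^ m)
                else real m * \<epsilon> * ln (real N) / (1 + \<epsilon>))"
  shows "real m * ln (real N) / (1 + \<epsilon>) \<le> ln (real n) - d"
proof -
  define c where "c = (if D > 2 then 1 - (real D - 1) / real N ^ m else 1)"
  have c: "0 < c" using c_pos by (simp add: c_def)
  have Nm: "0 < real N ^ m" using N by simp
  have "real N ^ m * c \<le> real n"
  proof (cases "D > 2")
    case True
    have "real (N ^ m) < real (n + (D - 1))" using n by linarith
    then have "real N ^ m - (real D - 1) < real n" using D by (simp add: of_nat_diff)
    moreover have "real N ^ m * ((real D - 1) / real N ^ m) = real D - 1" using Nm by simp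
    then have "real N ^ m * c = real N ^ m - (real D - 1)"
      using True by (simp add: c_def right_diff_distrib)
    ultimately show ?thesis by simp
  next
    case False
    then show ?thesis using n D by (simp add: c_def flip: of_nat_power)
  qed
  then have "ln (real N ^ m * c) \<le> ln (real n)" using Nm c by (intro ln_mono) auto
  then have "real m * ln (real N) + ln c \<le> ln (real n)" using Nm c N by (simp add: ln_mult ln_realpow)
  moreover have "d = real m * \<epsilon> * ln (real N) / (1 + \<epsilon>) + ln c" using d by (simp add: c_def)
  moreover have "real m * ln (real N) / (1 + \<epsilon>) = real m * ln (real N) - real m * \<epsilon> * ln (real N) / (1 + \<epsilon>)"
    using \<epsilon> by (simp add: field_simps)
  ultimately show ?thesis by linarith
qed

theorem theorem15:
  fixes S :: "'a set" and P :: "'a \<Rightarrow> real"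
    and X :: "'b set" and m :: nat and T :: "'a list set"
    and C :: "'a list \<Rightarrow> 'b list" and \<epsilon> d :: real
  assumes S_fin: "finite S" and D_ge: "card S \<ge> 2"
    and P_nonneg: "\<forall>s\<in>S. P s \<ge> 0" and P_sum: "(\<Sum>s\<in>S. P s) = 1"
    and X_fin: "finite X" and X_ge: "card X \<ge> 2"
    and tree: "tunstall_tree S P T"
    and n_le: "card T \<le> card X ^ m"
    and n_gt: "card X ^ m < card T + (card S - 1)"
    and code_inj: "inj_on C T"
    and code_words: "\<forall>w\<in>T. length (C w) = m \<and> set (C w) \<subseteq> X"
    and eps_pos: "\<epsilon> > 0"
    and d_arg_pos: "card S > 2 \<longrightarrow> 1 - (real (card S) - 1) / real (card X) ^ m > 0"
    and d_def: "d = (if card S > 2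
                     then real m * \<epsilon> * ln (real (card X)) / (1 + \<epsilon>)
                          + ln (1 - (real (card S) - 1) / real (card X) ^ m)
                     else real m * \<epsilon> * ln (real (card X)) / (1 + \<epsilon>))"
    and d_pos: "d > 0"
    and pmin: "Min (P ` S) \<ge> lambertW0 (- exp (- d - 1)) / lambertWm1 (- exp (- d - 1))"
  shows "compression_rate m (card X) P T \<le> (1 + \<epsilon>) * entropy S P"
proof -
  \<comment> \<open>The code itself only identifies \<open>R\<close> as a rate; the bound uses just \<open>n > |X|\<^sup>m - (D - 1)\<close>.\<close>
  define t where "t = lambertW0 (- exp (- d - 1)) / lambertWm1 (- exp (- d - 1))"
  define k where "k = - lambertWm1 (- exp (- d - 1))"
  note W = lambertW_chord[OF d_pos, folded t_def k_def]
  have P_bounds: "\<forall>s\<in>S. t \<le> P s \<and> P s \<le> 1"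
  proof
    fix s assume s: "s \<in> S"
    have "Min (P ` S) \<le> P s" using S_fin s by simp
    moreover have "P s \<le> 1" using member_le_sum[of s S P] S_fin P_nonneg P_sum s by simp
    ultimately show "t \<le> P s \<and> P s \<le> 1" using pmin unfolding t_def by linarith
  qed
  have ratio: "\<forall>v\<in>T. \<forall>w\<in>T. t * word_prob P w \<le> word_prob P v"
    using D_ge W(1) by (intro tunstall_tree_word_prob_ratio[OF tree _ P_bounds]) auto
  have "ln (card T) - d \<le> - (\<Sum>w\<in>T. word_prob P w * ln (word_prob P w))"
    using entropy_ge_of_bounded_ratio[OF tunstall_tree_finite[OF tree S_fin]
        tunstall_tree_sum_word_prob[OF tree S_fin P_sum] ratio W(1,2,4)] W(3)
    by simp
  also have "\<dots> = expected_depth P T * entropy S P"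
    by (rule tunstall_tree_leaf_entropy[OF tree S_fin P_nonneg P_sum])
  finally have "real m * ln (card X) / (1 + \<epsilon>) \<le> expected_depth P T * entropy S P"
    using ln_leaf_count_ge[OF X_ge n_gt D_ge eps_pos d_arg_pos d_def] by linarith
  moreover have "0 \<le> expected_depth P T"
    unfolding expected_depth_def using tunstall_tree_letters[OF tree] P_nonneg
    by (force intro!: sum_nonneg mult_nonneg_nonneg word_prob_nonneg)
  ultimately show ?thesis
    using entropy_nonneg[OF S_fin P_nonneg P_sum] eps_pos unfolding compression_rate_def
    by (cases "expected_depth P T = 0") (auto simp: divide_le_eq mult_ac)
qed

end
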